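(* Let $M_G$ be an $n$-vertex mixed graph with underlying graph $G$, and let $\Delta(G)$ be the maximum degree of $G$. Then $\rho(M_G)\le \Delta(G)$. Moreover, when $G$ is connected, equality $\rho(M_G)=\Delta(G)$ holds if and only if $G$ is $\Delta(G)$-regular and $V(M_G)$ can be partitioned into six (possibly empty) parts $V_1,V_{-1},V_{\omega},V_{\bar\omega},V_{-\omega},V_{-\bar\omega}$ (indexed by $\mathbb{T}_6=\{1,-1,\omega,\bar\omega,-\omega,-\bar\omega\}$) such that one of the following holds: (i) for every $j\in\mathbb{T}_6$ the induced mixed subgraph $M_G[V_j]$ contains only undirected edges, and every edge of $M_G$ not lying inside some $M_G[V_j]$ is an arc $\overrightarrow{uv}$ with $u\in V_j$ and $v\in V_{\bar\omega\cdot j}$ for some $j\in\mathbb{T}_6$; (ii) for every $j\in\mathbb{T}_6$ the set $V_j$ is independent in $G$; every undirected edge $\{u,v\}$ of $M_G$ satisfies $u\in V_j$, $v\in V_{-j}$ for some $j\in\mathbb{T}_6$; and every arc $\overrightarrow{uv}$ of $M_G$ satisfies $u\in V_j$, $v\in V_{-\bar\omega\cdot j}$ for some $j\in\mathbb{T}_6$.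
   Context: A mixed graph $M_G$ is obtained from a finite simple graph $G$ (its underlying graph) by orienting the edges of some subset of $E(G)$; oriented edges are arcs $\overrightarrow{uv}$, the others are undirected edges $\{u,v\}$. Let $\omega=\frac{1+\mathbf{i}\sqrt3}{2}$. The Hermitian adjacency matrix of the second kind $N(M_G)$ is indexed by the vertices, with $(u,v)$-entry $\omega$ if $\overrightarrow{uv}$ is an arc, $\bar\omega$ if $\overrightarrow{vu}$ is an arc, $1$ if $\{u,v\}$ is an undirected edge, and $0$ otherwise. Its eigenvalues are the eigenvalues of $M_G$; with $\lambda_1\ge\dots\ge\lambda_n$ these eigenvalues, the spectral radius is $\rho(M_G)=\max\{|\lambda_1|,|\lambda_n|\}$. $\mathbb{T}_6$ denotes the group of sixth roots of unity. *)

theory Defs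
  imports "HOL-Analysis.Analysis"
begin

text \<open>A mixed graph on the finite vertex type 'n (vertex set = UNIV):
  E is the edge relation of the underlying simple graph G,
  A u v means that the edge {u,v} is oriented as the arc from u to v.\<close>

definition mixed_graph :: "('n \<Rightarrow> 'n \<Rightarrow> bool) \<Rightarrow> ('n \<Rightarrow> 'n \<Rightarrow> bool) \<Rightarrow> bool" where
  "mixed_graph E A \<longleftrightarrow>
     (\<forall>u v. E u v \<longrightarrow> E v u) \<and> (\<forall>u. \<not> E u u) \<and>
     (\<forall>u v. A u v \<longrightarrow> E u v) \<and> (\<forall>u v. A u v \<longrightarrow> \<not> A v u)"

definition undirected_edge :: "('n \<Rightarrow> 'n \<Rightarrow> bool) \<Rightarrow> ('n \<Rightarrow> 'n \<Rightarrow> bool) \<Rightarrow> 'n \<Rightarrow> 'n \<Rightarrow> bool" where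
  "undirected_edge E A u v \<longleftrightarrow> E u v \<and> \<not> A u v \<and> \<not> A v u"

definition omega :: complex where
  "omega = (1 + \<i> * of_real (sqrt 3)) / 2"

definition T6 :: "complex set" where
  "T6 = {1, -1, omega, cnj omega, - omega, - cnj omega}"

definition hermN :: "('n::finite \<Rightarrow> 'n \<Rightarrow> bool) \<Rightarrow> ('n \<Rightarrow> 'n \<Rightarrow> bool) \<Rightarrow> complex^'n^'n" where
  "hermN E A = (\<chi> u v. if A u v then omega else if A v u then cnj omega
                       else if E u v then 1 else 0)"

definition is_eigenvalue :: "complex^'n^'n \<Rightarrow> complex \<Rightarrow> bool" where
  "is_eigenvalue M l \<longleftrightarrow> (\<exists>x. x \<noteq> 0 \<and> M *v x = l *s x)"

definition spectral_radius :: "complex^'n^'n \<Rightarrow> real" where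
  "spectral_radius M = Max {cmod l | l. is_eigenvalue M l}"

definition degree :: "('n \<Rightarrow> 'n \<Rightarrow> bool) \<Rightarrow> 'n \<Rightarrow> nat" where
  "degree E u = card {v. E u v}"

definition max_degree :: "('n::finite \<Rightarrow> 'n \<Rightarrow> bool) \<Rightarrow> nat" where
  "max_degree E = Max (range (degree E))"

definition regular :: "('n \<Rightarrow> 'n \<Rightarrow> bool) \<Rightarrow> nat \<Rightarrow> bool" where
  "regular E k \<longleftrightarrow> (\<forall>u. degree E u = k)"

definition connected_graph :: "('n \<Rightarrow> 'n \<Rightarrow> bool) \<Rightarrow> bool" where
  "connected_graph E \<longleftrightarrow> (\<forall>u v. E\<^sup>*\<^sup>* u v)"

end

theory Submission
  imports Defs "Jordan_Normal_Form.Spectral_Radius"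
begin

text \<open>Let \<open>x\<close> be an eigenvector of \<open>N = hermN E A\<close> for \<open>\<lambda>\<close>, and let \<open>u\<close> maximise \<open>|x\<^sub>u|\<close>.
  All nonzero entries of \<open>N\<close> have modulus 1, so the eigen-equation at \<open>u\<close> gives
  \<open>|\<lambda>| |x\<^sub>u| \<le> deg u |x\<^sub>u| \<le> \<Delta> |x\<^sub>u|\<close>. If \<open>|\<lambda>| = \<Delta>\<close>, equality in the triangle
  inequality forces \<open>deg u = \<Delta>\<close> and \<open>\<Delta> N\<^sub>u\<^sub>v x\<^sub>v = \<lambda> x\<^sub>u\<close> for every neighbour \<open>v\<close>; hence
  \<open>|x\<^sub>v| = |x\<^sub>u|\<close>, and by connectivity this holds at every vertex, so \<open>G\<close> is
  \<open>\<Delta>\<close>-regular. Going along an edge and back, with \<open>N\<^sub>v\<^sub>u = conj N\<^sub>u\<^sub>v\<close>, gives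
  \<open>\<lambda>\<^sup>2 = \<Delta>\<^sup>2\<close>. The normalised eigenvector \<open>f = x / x\<^sub>u\<close> then satisfies
  \<open>N\<^sub>u\<^sub>v f\<^sub>v = \<plusminus>f\<^sub>u\<close> on every edge, so it takes values in \<open>T6\<close>, and these edge equations
  are exactly conditions (i) (sign \<open>+\<close>) and (ii) (sign \<open>-\<close>) on the partition into the
  fibres of \<open>f\<close>. Conversely, such a labelling of a \<open>\<Delta>\<close>-regular graph is an
  eigenvector for \<open>\<plusminus>\<Delta>\<close>.\<close>

hide_const (open) Spectral_Radius.spectral_radius
no_notation Matrix.vec_index (infixl \<open>$\<close> 100)

section \<open>Eigenvalues of complex matrices indexed by a finite type\<close>

lemma is_eigenvalue_iff_eigenvalue_reindexed:
  fixes M :: "complex^'n::finite^'n"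
  assumes h: "bij_betw h {0..<CARD('n)} UNIV"
  shows "is_eigenvalue M l \<longleftrightarrow>
    eigenvalue (Matrix.mat CARD('n) CARD('n) (\<lambda>(i, j). M $ h i $ h j)) l"
proof -
  let ?n = "CARD('n)"
  let ?B = "Matrix.mat ?n ?n (\<lambda>(i, j). M $ h i $ h j)"
  define g where "g = inv_into {0..<?n} h"
  have g: "g u < ?n" "h (g u) = u" for u
    using h bij_betw_inv_into_right[OF h] bij_betw_apply[OF bij_betw_inv_into[OF h]]
    unfolding g_def by auto
  have hg: "i < ?n \<Longrightarrow> g (h i) = i" for i
    using h unfolding g_def bij_betw_def by auto
  have sum_reindex: "(\<Sum>u\<in>UNIV. F u) = (\<Sum>i<?n. F (h i))" for F :: "'n \<Rightarrow> complex"
    using sum.reindex_bij_betw[OF h, of F] by (simp add: atLeast0LessThan)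
  define to_vec :: "complex^'n \<Rightarrow> complex Matrix.vec"
    where "to_vec x = Matrix.vec ?n (\<lambda>i. x $ h i)" for x
  define of_vec :: "complex Matrix.vec \<Rightarrow> complex^'n"
    where "of_vec v = (\<chi> u. vec_index v (g u))" for v
  have of_to: "of_vec (to_vec x) = x" for x
    by (simp add: of_vec_def to_vec_def g Finite_Cartesian_Product.vec_eq_iff)
  have to_of: "v \<in> carrier_vec ?n \<Longrightarrow> to_vec (of_vec v) = v" for v
    by (auto simp: of_vec_def to_vec_def hg)
  have to_vec_mult: "to_vec (M *v x) = ?B *\<^sub>v to_vec x" for x
    by (rule eq_vecI)
      (simp_all add: to_vec_def matrix_vector_mult_def scalar_prod_def sum_reindex atLeast0LessThan)
  have to_vec_smult: "to_vec (c *s x) = c \<cdot>\<^sub>v to_vec x" for c x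
    by (rule eq_vecI) (simp_all add: to_vec_def)
  have to_vec_carrier: "to_vec x \<in> carrier_vec ?n" for x
    by (simp add: to_vec_def)
  have to_vec_eq_iff: "to_vec x = to_vec y \<longleftrightarrow> x = y" for x y
    by (metis of_to)
  have to_vec_0: "to_vec 0 = 0\<^sub>v ?n"
    by (rule eq_vecI) (simp_all add: to_vec_def)
  have "(\<exists>x. x \<noteq> 0 \<and> M *v x = l *s x) \<longleftrightarrow>
        (\<exists>v\<in>carrier_vec ?n. v \<noteq> 0\<^sub>v ?n \<and> ?B *\<^sub>v v = l \<cdot>\<^sub>v v)"
  proof
    assume "\<exists>x. x \<noteq> 0 \<and> M *v x = l *s x"
    then show "\<exists>v\<in>carrier_vec ?n. v \<noteq> 0\<^sub>v ?n \<and> ?B *\<^sub>v v = l \<cdot>\<^sub>v v"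
      by (metis to_vec_carrier to_vec_mult to_vec_smult to_vec_0 to_vec_eq_iff)
  next
    assume "\<exists>v\<in>carrier_vec ?n. v \<noteq> 0\<^sub>v ?n \<and> ?B *\<^sub>v v = l \<cdot>\<^sub>v v"
    then show "\<exists>x. x \<noteq> 0 \<and> M *v x = l *s x"
      by (metis to_of to_vec_mult to_vec_smult to_vec_0 to_vec_eq_iff)
  qed
  then show ?thesis
    unfolding is_eigenvalue_def eigenvalue_def eigenvector_def by (simp add: Bex_def)
qed

lemma finite_eigenvalues_nonempty:
  fixes M :: "complex^'n::finite^'n"
  shows "finite {l. is_eigenvalue M l} \<and> {l. is_eigenvalue M l} \<noteq> {}"
proof -
  obtain h where h: "bij_betw h {0..<CARD('n)} (UNIV :: 'n set)"
    using ex_bij_betw_nat_finite[of "UNIV :: 'n set"] by auto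
  let ?B = "Matrix.mat CARD('n) CARD('n) (\<lambda>(i, j). M $ h i $ h j)"
  have "{l. is_eigenvalue M l} = spectrum ?B"
    unfolding spectrum_def using is_eigenvalue_iff_eigenvalue_reindexed[OF h] by auto
  moreover have B: "?B \<in> carrier_mat CARD('n) CARD('n)"
    by simp
  ultimately show ?thesis
    using card_finite_spectrum(1)[OF B] spectrum_non_empty[OF B] by simp
qed

lemma spectral_radius_eq_Max:
  "spectral_radius M = Max (cmod ` {l. is_eigenvalue M l})"
  unfolding Defs.spectral_radius_def by (simp only: setcompr_eq_image)

lemma spectral_radius_attained:
  fixes M :: "complex^'n::finite^'n"
  obtains l where "is_eigenvalue M l" "cmod l = spectral_radius M"
proof -
  have "spectral_radius M \<in> cmod ` {l. is_eigenvalue M l}"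
    unfolding spectral_radius_eq_Max
    using finite_eigenvalues_nonempty[of M] by (intro Max_in) auto
  then show ?thesis
    using that by (auto simp: image_iff)
qed

lemma norm_eigenvalue_le_spectral_radius:
  fixes M :: "complex^'n::finite^'n"
  assumes "is_eigenvalue M l"
  shows "cmod l \<le> spectral_radius M"
  unfolding spectral_radius_eq_Max
  using assms finite_eigenvalues_nonempty[of M] by (intro Max_ge) auto

lemma spectral_radius_le:
  fixes M :: "complex^'n::finite^'n"
  assumes "\<And>l. is_eigenvalue M l \<Longrightarrow> cmod l \<le> r"
  shows "spectral_radius M \<le> r"
  using spectral_radius_attained assms by metis

lemma spectral_radius_eq_iff_attained:
  fixes M :: "complex^'n::finite^'n"
  assumes "\<And>l. is_eigenvalue M l \<Longrightarrow> cmod l \<le> r"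
  shows "spectral_radius M = r \<longleftrightarrow> (\<exists>l. is_eigenvalue M l \<and> cmod l = r)"
  using spectral_radius_attained spectral_radius_le[OF assms] norm_eigenvalue_le_spectral_radius
  by (metis order.antisym)

lemma max_norm_component:
  fixes x :: "complex^'n::finite"
  assumes "x \<noteq> 0"
  obtains u where "x $ u \<noteq> 0" "\<And>v. cmod (x $ v) \<le> cmod (x $ u)"
proof -
  have "Max (range (\<lambda>v. cmod (x $ v))) \<in> range (\<lambda>v. cmod (x $ v))"
    by (rule Max_in) auto
  then obtain u where u: "cmod (x $ u) = Max (range (\<lambda>v. cmod (x $ v)))"
    by (metis rangeE)
  then have max: "cmod (x $ v) \<le> cmod (x $ u)" for v
    by simp
  moreover have "x $ u \<noteq> 0"
  proof
    assume "x $ u = 0"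
    then have "x $ v = 0" for v
      using max[of v] by simp
    then show False
      using assms by (simp add: Finite_Cartesian_Product.vec_eq_iff)
  qed
  ultimately show ?thesis
    using that by blast
qed

lemma norm_eigenvalue_le_row_sum:
  fixes M :: "complex^'n::finite^'n"
  assumes "is_eigenvalue M l" and row: "\<And>u. (\<Sum>v\<in>UNIV. cmod (M $ u $ v)) \<le> r"
  shows "cmod l \<le> r"
proof -
  obtain x where x: "x \<noteq> 0" "M *v x = l *s x"
    using assms(1) unfolding is_eigenvalue_def by auto
  obtain u where "x $ u \<noteq> 0" and max: "\<And>v. cmod (x $ v) \<le> cmod (x $ u)"
    using max_norm_component[OF x(1)] by blast
  have "cmod l * cmod (x $ u) = cmod ((M *v x) $ u)"
    using x(2) by (simp add: norm_mult)
  also have "\<dots> \<le> (\<Sum>v\<in>UNIV. cmod (M $ u $ v) * cmod (x $ v))"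
    unfolding matrix_vector_mult_def by (simp add: norm_sum[THEN order_trans] norm_mult)
  also have "\<dots> \<le> (\<Sum>v\<in>UNIV. cmod (M $ u $ v)) * cmod (x $ u)"
    unfolding sum_distrib_right by (intro sum_mono mult_left_mono max) simp
  also have "\<dots> \<le> r * cmod (x $ u)"
    using row by (simp add: mult_right_mono)
  finally show ?thesis
    using \<open>x $ u \<noteq> 0\<close> by simp
qed

lemma complex_of_real_Re_if_norm_le_Re:
  assumes "cmod z \<le> Re z"
  shows "z = of_real (Re z)"
proof -
  have "cmod z = Re z"
    using assms complex_Re_le_cmod[of z] by linarith
  then have "Im z ^ 2 = 0"
    using cmod_power2[of z] by simp
  then show ?thesis
    by (simp add: complex_eq_iff)
qed

lemma eq_scaled_unit_if_Re_sum_maximal: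
  fixes t :: "'a \<Rightarrow> complex"
  assumes S: "finite S" and bound: "\<And>w. w \<in> S \<Longrightarrow> cmod (t w) \<le> m"
    and e: "cmod e = 1" and Re_sum: "Re (cnj e * sum t S) = real (card S) * m" and w: "w \<in> S"
  shows "t w = e * of_real m"
proof -
  have norm_cnj_e_mult: "cmod (cnj e * z) = cmod z" for z
    using e by (simp add: norm_mult)
  have Re_le: "Re (cnj e * t w) \<le> m" if "w \<in> S" for w
    using complex_Re_le_cmod[of "cnj e * t w"] bound[OF that] norm_cnj_e_mult[of "t w"]
    by linarith
  have "(\<Sum>w\<in>S. Re (cnj e * t w)) = Re (cnj e * sum t S)"
    by (simp add: Re_sum sum_distrib_left)
  then have sum_0: "(\<Sum>w\<in>S. m - Re (cnj e * t w)) = 0"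
    using Re_sum by (simp add: sum_subtractf)
  have nonneg: "\<And>w. w \<in> S \<Longrightarrow> 0 \<le> m - Re (cnj e * t w)"
    using Re_le by simp
  have "\<forall>w\<in>S. m - Re (cnj e * t w) = 0"
    using sum_0 by (simp only: sum_nonneg_eq_0_iff[OF S nonneg])
  then have "Re (cnj e * t w) = m"
    using w by auto
  then have "cnj e * t w = of_real m"
    using complex_of_real_Re_if_norm_le_Re[of "cnj e * t w"] bound[OF w]
      norm_cnj_e_mult[of "t w"] by simp
  moreover have "e * cnj e = 1"
    using complex_norm_square[of e] e by simp
  ultimately show ?thesis
    by (metis mult.assoc mult_1)
qed

lemma card_mult_eq_sum_if_norm_sum_eq:
  fixes t :: "'a \<Rightarrow> complex"
  assumes S: "finite S" and bound: "\<And>w. w \<in> S \<Longrightarrow> cmod (t w) \<le> m"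
    and norm_sum: "cmod (sum t S) = real (card S) * m" and v: "v \<in> S"
  shows "of_nat (card S) * t v = sum t S"
proof -
  define a where "a = sum t S"
  define e where "e = a / of_real (cmod a)"
  have "card S > 0"
    using S v by (auto simp: card_gt_0_iff)
  have const: "t w = e * of_real m" if w: "w \<in> S" for w
  proof (cases "a = 0")
    case True
    then have "m = 0"
      using norm_sum \<open>card S > 0\<close> unfolding a_def by simp
    then show ?thesis
      using bound[OF w] by simp
  next
    case False
    then have "cmod e = 1"
      unfolding e_def by (simp add: norm_divide)
    have "cnj e * a = cnj a * a / of_real (cmod a)"
      unfolding e_def by simp
    also have "\<dots> = of_real (cmod a) ^ 2 / of_real (cmod a)"
      by (metis complex_norm_square mult.commute of_real_power)
    also have "\<dots> = of_real (cmod a)"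
      using \<open>a \<noteq> 0\<close> by (simp add: power2_eq_square)
    finally have "Re (cnj e * sum t S) = real (card S) * m"
      using norm_sum unfolding a_def by simp
    from S bound \<open>cmod e = 1\<close> this w show ?thesis
      by (rule eq_scaled_unit_if_Re_sum_maximal)
  qed
  then have "sum t S = of_nat (card S) * (e * of_real m)"
    by simp
  then show ?thesis
    using const[OF v] by simp
qed


section \<open>Sixth roots of unity\<close>

lemma omega_eq_Complex: "omega = Complex (1/2) (sqrt 3 / 2)"
  unfolding omega_def by (simp add: complex_eq_iff)

lemma omega_mult_cnj_omega [simp]: "omega * cnj omega = 1"
  by (simp add: omega_eq_Complex complex_eq_iff power_divide)

lemma cnj_omega_mult_omega [simp]: "cnj omega * omega = 1"
  using omega_mult_cnj_omega by (simp only: mult.commute)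

lemma omega_cancel [simp]: "omega * (cnj omega * z) = z" "cnj omega * (omega * z) = z"
  by (simp_all flip: mult.assoc)

lemma omega_mult_eq_iff: "omega * z = w \<longleftrightarrow> z = cnj omega * w"
  by auto

lemma norm_omega [simp]: "cmod omega = 1"
  by (simp add: omega_eq_Complex cmod_def power_divide)

lemma omega_neq [simp]:
  "omega \<noteq> 1" "omega \<noteq> -1" "cnj omega \<noteq> 1" "cnj omega \<noteq> -1"
  by (simp_all add: omega_eq_Complex complex_eq_iff)

lemma omega_power2: "omega ^ 2 = - cnj omega"
  by (simp add: omega_eq_Complex complex_eq_iff power2_eq_square)

lemma omega_power3: "omega ^ 3 = -1"
proof -
  have "omega ^ 3 = omega * omega ^ 2"
    by (simp add: power_numeral_reduce)
  then show ?thesis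
    by (simp add: omega_power2)
qed

lemma omega_power_mod_6: "omega ^ k = omega ^ (k mod 6)"
proof -
  have "omega ^ 6 = (omega ^ 3) ^ 2"
    by (simp flip: power_mult)
  then have "omega ^ 6 = 1"
    by (simp add: omega_power3)
  have "omega ^ k = omega ^ (6 * (k div 6) + k mod 6)"
    by simp
  also have "\<dots> = (omega ^ 6) ^ (k div 6) * omega ^ (k mod 6)"
    by (simp only: power_add power_mult)
  finally show ?thesis
    using \<open>omega ^ 6 = 1\<close> by simp
qed

lemma T6_eq_range_omega_power: "T6 = range (\<lambda>k. omega ^ k)"
proof -
  have powers: "omega ^ 0 = 1" "omega ^ 1 = omega" "omega ^ 2 = - cnj omega"
    "omega ^ 3 = -1" "omega ^ 4 = - omega" "omega ^ 5 = cnj omega"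
    using omega_power3 omega_power2 power_add[of omega 3 1] power_add[of omega 3 2]
    by simp_all
  have "range (\<lambda>k. omega ^ k) = (\<lambda>k. omega ^ k) ` {..<6}"
    using omega_power_mod_6 by (auto intro: image_eqI[of _ _ "_ mod 6"])
  also have "{..<6 :: nat} = {0, 1, 2, 3, 4, 5}"
    by auto
  finally have "range (\<lambda>k. omega ^ k) = {omega ^ 0, omega ^ 1, omega ^ 2, omega ^ 3, omega ^ 4, omega ^ 5}"
    by (simp only: image_insert image_empty)
  then show ?thesis
    unfolding powers T6_def by blast
qed

lemma T6_mult: "a \<in> T6 \<Longrightarrow> b \<in> T6 \<Longrightarrow> a * b \<in> T6"
  unfolding T6_eq_range_omega_power by (auto simp flip: power_add)

lemma zero_notin_T6: "0 \<notin> T6"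
  unfolding T6_def by (auto simp: omega_eq_Complex complex_eq_iff)

lemma T6_elems [simp]: "1 \<in> T6" "-1 \<in> T6" "omega \<in> T6" "cnj omega \<in> T6"
  unfolding T6_def by auto


section \<open>The Hermitian adjacency matrix of a mixed graph\<close>

lemma connected_graph_induct:
  assumes "connected_graph E" and "P u" and step: "\<And>v w. P v \<Longrightarrow> E v w \<Longrightarrow> P w"
  shows "P w"
proof -
  have "E\<^sup>*\<^sup>* u w"
    using assms(1) unfolding connected_graph_def by blast
  then show ?thesis
    by (induction rule: rtranclp_induct) (use assms(2) step in blast)+
qed

text \<open>A labelling \<open>f\<close> with values in \<open>T6\<close> encodes the partition into the fibres
  \<open>V\<^sub>j = f -` {j}\<close>; the two definitions are conditions (i) and (ii) on it.\<close>

definition T6_partition_i :: "('n \<Rightarrow> 'n \<Rightarrow> bool) \<Rightarrow> ('n \<Rightarrow> 'n \<Rightarrow> bool) \<Rightarrow> ('n \<Rightarrow> complex) \<Rightarrow> bool"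
  where "T6_partition_i E A f \<longleftrightarrow>
    (\<forall>u v. E u v \<and> f u = f v \<longrightarrow> undirected_edge E A u v) \<and>
    (\<forall>u v. E u v \<and> f u \<noteq> f v \<longrightarrow>
       (A u v \<and> f v = cnj omega * f u) \<or> (A v u \<and> f u = cnj omega * f v))"

definition T6_partition_ii :: "('n \<Rightarrow> 'n \<Rightarrow> bool) \<Rightarrow> ('n \<Rightarrow> 'n \<Rightarrow> bool) \<Rightarrow> ('n \<Rightarrow> complex) \<Rightarrow> bool"
  where "T6_partition_ii E A f \<longleftrightarrow>
    (\<forall>u v. E u v \<longrightarrow> f u \<noteq> f v) \<and>
    (\<forall>u v. undirected_edge E A u v \<longrightarrow> f v = - f u) \<and>
    (\<forall>u v. A u v \<longrightarrow> f v = - cnj omega * f u)"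

context
  fixes E A :: "'n::finite \<Rightarrow> 'n \<Rightarrow> bool"
  assumes mg: "mixed_graph E A"
begin

lemma hermN_eq_0: "\<not> E u v \<Longrightarrow> hermN E A $ u $ v = 0"
  using mg unfolding mixed_graph_def hermN_def by auto

lemma hermN_edge_cases:
  assumes "E u v"
  obtains "A u v" "hermN E A $ u $ v = omega"
    | "A v u" "hermN E A $ u $ v = cnj omega"
    | "undirected_edge E A u v" "hermN E A $ u $ v = 1"
  using assms mg that unfolding mixed_graph_def undirected_edge_def hermN_def by auto

lemma norm_hermN_edge: "E u v \<Longrightarrow> cmod (hermN E A $ u $ v) = 1"
  by (erule hermN_edge_cases) simp_all

lemma hermN_swap: "hermN E A $ v $ u = cnj (hermN E A $ u $ v)"
  using mg unfolding mixed_graph_def hermN_def by auto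

lemma cnj_hermN_mult_hermN: "E u v \<Longrightarrow> cnj (hermN E A $ u $ v) * hermN E A $ u $ v = 1"
  by (erule hermN_edge_cases) simp_all

lemma cnj_hermN_in_T6: "E u v \<Longrightarrow> cnj (hermN E A $ u $ v) \<in> T6"
  by (erule hermN_edge_cases) simp_all

lemma hermN_mult_vec_nth:
  "(hermN E A *v x) $ u = (\<Sum>v | E u v. hermN E A $ u $ v * x $ v)"
  unfolding matrix_vector_mult_def
  by (simp, rule sum.mono_neutral_right) (auto simp: hermN_eq_0)

lemma sum_norm_hermN_row: "(\<Sum>v\<in>UNIV. cmod (hermN E A $ u $ v)) = real (Defs.degree E u)"
proof -
  have "(\<Sum>v\<in>UNIV. cmod (hermN E A $ u $ v)) = (\<Sum>v | E u v. 1)"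
    by (rule sum.mono_neutral_cong_right) (auto simp: hermN_eq_0 norm_hermN_edge)
  then show ?thesis
    by (simp add: Defs.degree_def)
qed

lemma norm_eigenvalue_hermN_le_max_degree:
  assumes "is_eigenvalue (hermN E A) l"
  shows "cmod l \<le> real (max_degree E)"
  using assms
proof (rule norm_eigenvalue_le_row_sum)
  show "(\<Sum>v\<in>UNIV. cmod (hermN E A $ u $ v)) \<le> real (max_degree E)" for u
    unfolding sum_norm_hermN_row max_degree_def by simp
qed

lemma extremal_vertex_eigen_equation:
  assumes x: "hermN E A *v x = l *s x" and l: "cmod l = real (max_degree E)"
    and max: "\<And>v. cmod (x $ v) \<le> cmod (x $ u)" and "x $ u \<noteq> 0"
  shows "Defs.degree E u = max_degree E"
    and "E u v \<Longrightarrow> of_nat (max_degree E) * (hermN E A $ u $ v * x $ v) = l * x $ u"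
proof -
  let ?S = "{v. E u v}" and ?t = "\<lambda>v. hermN E A $ u $ v * x $ v" and ?m = "cmod (x $ u)"
  have sum_t: "sum ?t ?S = l * x $ u"
    using hermN_mult_vec_nth[of x u] x by simp
  have t_le: "cmod (?t v) \<le> ?m" if "v \<in> ?S" for v
    using that max[of v] by (simp add: norm_mult norm_hermN_edge)
  have "real (max_degree E) * ?m = cmod (sum ?t ?S)"
    using sum_t l by (simp add: norm_mult)
  also have "\<dots> \<le> (\<Sum>v\<in>?S. cmod (?t v))"
    by (rule norm_sum)
  also have "\<dots> \<le> (\<Sum>v\<in>?S. ?m)"
    by (rule sum_mono[OF t_le])
  also have "\<dots> = real (card ?S) * ?m"
    by simp
  finally have chain: "real (max_degree E) * ?m \<le> real (card ?S) * ?m" .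
  have "card ?S \<le> max_degree E"
    using Max_ge[of "range (Defs.degree E)"] unfolding max_degree_def Defs.degree_def by simp
  then have card_S: "card ?S = max_degree E"
    using chain \<open>x $ u \<noteq> 0\<close> by simp
  then show "Defs.degree E u = max_degree E"
    unfolding Defs.degree_def .
  have "cmod (sum ?t ?S) = real (card ?S) * ?m"
    using sum_t l card_S by (simp add: norm_mult)
  then show "E u v \<Longrightarrow> of_nat (max_degree E) * (hermN E A $ u $ v * x $ v) = l * x $ u"
    using card_mult_eq_sum_if_norm_sum_eq[of ?S ?t ?m v] t_le card_S sum_t by simp
qed

lemma extremal_eigenvector:
  assumes conn: "connected_graph E" and x: "hermN E A *v x = l *s x" "x \<noteq> 0"
    and l: "cmod l = real (max_degree E)"
  shows "regular E (max_degree E)"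
    and "\<And>w. x $ w \<noteq> 0"
    and "\<And>u v. E u v \<Longrightarrow> of_nat (max_degree E) * (hermN E A $ u $ v * x $ v) = l * x $ u"
proof -
  obtain u0 where "x $ u0 \<noteq> 0" and max: "\<And>v. cmod (x $ v) \<le> cmod (x $ u0)"
    using max_norm_component[OF x(2)] by blast
  let ?P = "\<lambda>w. cmod (x $ w) = cmod (x $ u0)"
  have extremal: "Defs.degree E w = max_degree E"
    "E w v \<Longrightarrow> of_nat (max_degree E) * (hermN E A $ w $ v * x $ v) = l * x $ w"
    if "?P w" for w v
  proof -
    have "cmod (x $ v) \<le> cmod (x $ w)" for v
      using that max by simp
    moreover have "x $ w \<noteq> 0"
      using that \<open>x $ u0 \<noteq> 0\<close> by auto
    ultimately show "Defs.degree E w = max_degree E"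
      "E w v \<Longrightarrow> of_nat (max_degree E) * (hermN E A $ w $ v * x $ v) = l * x $ w"
      using extremal_vertex_eigen_equation[OF x(1) l] by blast+
  qed
  have all_extremal: "?P w" for w
    using conn
  proof (rule connected_graph_induct[where P = ?P and u = u0])
    fix v w assume "?P v" "E v w"
    then have "card {w. E v w} > 0"
      by (auto simp: card_gt_0_iff)
    then have "max_degree E > 0"
      using extremal(1)[OF \<open>?P v\<close>] by (simp add: Defs.degree_def)
    moreover have "real (max_degree E) * cmod (x $ w) = real (max_degree E) * cmod (x $ v)"
      using arg_cong[OF extremal(2)[OF \<open>?P v\<close> \<open>E v w\<close>], of cmod] l
      by (simp add: norm_mult norm_hermN_edge[OF \<open>E v w\<close>])
    ultimately show "?P w"
      using \<open>?P v\<close> by simp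
  qed simp
  show "regular E (max_degree E)"
    unfolding regular_def using extremal(1)[OF all_extremal] by blast
  show "x $ w \<noteq> 0" for w
    using \<open>x $ u0 \<noteq> 0\<close> all_extremal[of w] by auto
  show "E u v \<Longrightarrow> of_nat (max_degree E) * (hermN E A $ u $ v * x $ v) = l * x $ u" for u v
    using extremal(2)[OF all_extremal] .
qed

lemma extremal_eigenvalue_eq_pm:
  assumes edge_eq: "\<And>u v. E u v \<Longrightarrow> of_nat d * (hermN E A $ u $ v * x $ v) = l * x $ u"
    and nonzero: "\<And>w. x $ w \<noteq> 0" and "E u v"
  shows "l = of_nat d \<or> l = - of_nat d"
proof -
  let ?c = "hermN E A $ u $ v"
  have "E v u"
    using mg \<open>E u v\<close> unfolding mixed_graph_def by blast
  have "of_nat d * (cnj ?c * x $ u) = l * x $ v"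
    using edge_eq[OF \<open>E v u\<close>] hermN_swap[of u v] by simp
  then have "(of_nat d * (?c * x $ v)) * (of_nat d * (cnj ?c * x $ u)) = (l * x $ u) * (l * x $ v)"
    using edge_eq[OF \<open>E u v\<close>] by simp
  then have "(of_nat d ^ 2 * (cnj ?c * ?c)) * (x $ u * x $ v) = l ^ 2 * (x $ u * x $ v)"
    by (simp add: power2_eq_square algebra_simps)
  then have "of_nat d ^ 2 = l ^ 2"
    using cnj_hermN_mult_hermN[OF \<open>E u v\<close>] nonzero by simp
  then show ?thesis
    using power2_eq_iff by metis
qed

lemma T6_valued_if_edge_equation:
  assumes conn: "connected_graph E" and "s \<in> T6" and "f u \<in> T6"
    and edge_eq: "\<And>u v. E u v \<Longrightarrow> hermN E A $ u $ v * f v = s * f u"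
  shows "f w \<in> T6"
  using conn \<open>f u \<in> T6\<close>
proof (rule connected_graph_induct[where P = "\<lambda>w. f w \<in> T6"])
  fix v w assume "f v \<in> T6" "E v w"
  have "f w = cnj (hermN E A $ v $ w) * (hermN E A $ v $ w * f w)"
    using cnj_hermN_mult_hermN[OF \<open>E v w\<close>] by (simp flip: mult.assoc)
  also have "\<dots> = cnj (hermN E A $ v $ w) * s * f v"
    using edge_eq[OF \<open>E v w\<close>] by (simp add: mult.assoc)
  finally show "f w \<in> T6"
    using T6_mult cnj_hermN_in_T6[OF \<open>E v w\<close>] \<open>s \<in> T6\<close> \<open>f v \<in> T6\<close> by metis
qed

lemma T6_partition_i_iff_edge_equation:
  assumes nonzero: "\<And>w. f w \<noteq> 0"
  shows "T6_partition_i E A f \<longleftrightarrow> (\<forall>u v. E u v \<longrightarrow> hermN E A $ u $ v * f v = f u)"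
proof (intro iffI allI impI)
  fix u v assume part: "T6_partition_i E A f" and "E u v"
  have "\<not> (A u v \<and> A v u)"
    using mg unfolding mixed_graph_def by blast
  moreover have "f u = f v \<Longrightarrow> undirected_edge E A u v"
    and "f u \<noteq> f v \<Longrightarrow> (A u v \<and> f v = cnj omega * f u) \<or> (A v u \<and> f u = cnj omega * f v)"
    using part \<open>E u v\<close> unfolding T6_partition_i_def by blast+
  ultimately show "hermN E A $ u $ v * f v = f u"
    by (cases "f u = f v"; cases rule: hermN_edge_cases[OF \<open>E u v\<close>])
      (auto simp: undirected_edge_def)
next
  assume edge_eq: "\<forall>u v. E u v \<longrightarrow> hermN E A $ u $ v * f v = f u"
  show "T6_partition_i E A f"
    unfolding T6_partition_i_def
  proof (intro conjI allI impI; elim conjE)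
    fix u v assume "E u v" "f u = f v"
    then have "hermN E A $ u $ v = 1"
      using edge_eq nonzero by (metis mult_cancel_right2)
    then show "undirected_edge E A u v"
      by (cases rule: hermN_edge_cases[OF \<open>E u v\<close>]) simp_all
  next
    fix u v assume "E u v" "f u \<noteq> f v"
    then have "hermN E A $ u $ v * f v = f u"
      using edge_eq by blast
    with \<open>f u \<noteq> f v\<close>
    show "(A u v \<and> f v = cnj omega * f u) \<or> (A v u \<and> f u = cnj omega * f v)"
      by (cases rule: hermN_edge_cases[OF \<open>E u v\<close>]) (auto simp: omega_mult_eq_iff)
  qed
qed

lemma T6_partition_ii_iff_edge_equation:
  assumes nonzero: "\<And>w. f w \<noteq> 0"
  shows "T6_partition_ii E A f \<longleftrightarrow> (\<forall>u v. E u v \<longrightarrow> hermN E A $ u $ v * f v = - f u)"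
proof (intro iffI allI impI)
  fix u v assume part: "T6_partition_ii E A f" and "E u v"
  then show "hermN E A $ u $ v * f v = - f u"
    by (cases rule: hermN_edge_cases[OF \<open>E u v\<close>]) (auto simp: T6_partition_ii_def)
next
  assume edge_eq: "\<forall>u v. E u v \<longrightarrow> hermN E A $ u $ v * f v = - f u"
  have "f u \<noteq> f v" if "E u v" for u v
  proof
    assume "f u = f v"
    then have "hermN E A $ u $ v = -1"
      using edge_eq \<open>E u v\<close> nonzero by (metis mult_minus1 mult_cancel_right)
    then show False
      by (cases rule: hermN_edge_cases[OF \<open>E u v\<close>]) simp_all
  qed
  moreover have "f v = - f u" if "undirected_edge E A u v" for u v
    using that edge_eq[rule_format, of u v] by (simp add: undirected_edge_def hermN_def)
  moreover have "f v = - cnj omega * f u" if "A u v" for u v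
  proof -
    have "E u v"
      using mg \<open>A u v\<close> unfolding mixed_graph_def by blast
    then have "omega * f v = - f u"
      using edge_eq[rule_format, OF \<open>E u v\<close>] \<open>A u v\<close> by (simp add: hermN_def)
    then show ?thesis
      by (simp add: omega_mult_eq_iff)
  qed
  ultimately show "T6_partition_ii E A f"
    unfolding T6_partition_ii_def by blast
qed

lemma T6_partition_iff_edge_equation:
  assumes nonzero: "\<And>w. f w \<noteq> 0"
  shows "T6_partition_i E A f \<or> T6_partition_ii E A f \<longleftrightarrow>
    (\<exists>s. (s = 1 \<or> s = -1) \<and> (\<forall>u v. E u v \<longrightarrow> hermN E A $ u $ v * f v = s * f u))"
  unfolding T6_partition_i_iff_edge_equation[OF nonzero] T6_partition_ii_iff_edge_equation[OF nonzero]
  by auto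

lemma eigenvector_if_edge_equation:
  assumes "regular E k" and edge_eq: "\<And>u v. E u v \<Longrightarrow> hermN E A $ u $ v * f v = s * f u"
  shows "hermN E A *v (\<chi> u. f u) = (of_nat k * s) *s (\<chi> u. f u)"
proof -
  have "(hermN E A *v (\<chi> u. f u)) $ u = (\<Sum>v | E u v. s * f u)" for u
    unfolding hermN_mult_vec_nth by (rule sum.cong) (simp_all add: edge_eq)
  moreover have "card {v. E u v} = k" for u
    using \<open>regular E k\<close> unfolding regular_def Defs.degree_def by simp
  ultimately show ?thesis
    by (simp add: Finite_Cartesian_Product.vec_eq_iff)
qed

lemma extremal_eigenvalue_T6_labelling:
  assumes conn: "connected_graph E" and "is_eigenvalue (hermN E A) l"
    and l: "cmod l = real (max_degree E)"
  obtains s f where "regular E (max_degree E)" "s = 1 \<or> s = -1" "\<And>w. f w \<in> T6"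
    "\<And>u v. E u v \<Longrightarrow> hermN E A $ u $ v * f v = s * f u"
proof -
  obtain x where x: "hermN E A *v x = l *s x" "x \<noteq> 0"
    using assms(2) unfolding is_eigenvalue_def by auto
  note extremal = extremal_eigenvector[OF conn x l]
  show ?thesis
  proof (cases "\<exists>u v. E u v")
    case False
    then show ?thesis
      using that[of 1 "\<lambda>_. 1"] extremal(1) by auto
  next
    case True
    then obtain u0 v0 where "E u0 v0"
      by blast
    then have "card {v. E u0 v} > 0"
      by (auto simp: card_gt_0_iff)
    then have "max_degree E > 0"
      using extremal(1) unfolding regular_def Defs.degree_def by simp
    define s where "s = l / of_nat (max_degree E)"
    define f where "f w = x $ w / x $ u0" for w
    have "l = of_nat (max_degree E) \<or> l = - of_nat (max_degree E)"
      using extremal_eigenvalue_eq_pm[OF extremal(3) extremal(2) \<open>E u0 v0\<close>] .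
    then have s: "s = 1 \<or> s = -1"
      using \<open>max_degree E > 0\<close> unfolding s_def by auto
    have edge_eq: "hermN E A $ u $ v * f v = s * f u" if "E u v" for u v
      using extremal(3)[OF that] extremal(2)[of u0] \<open>max_degree E > 0\<close>
      unfolding s_def f_def by (simp add: field_simps)
    have "s \<in> T6" "f u0 \<in> T6"
      using s extremal(2)[of u0] unfolding f_def by auto
    then have "f w \<in> T6" for w
      using T6_valued_if_edge_equation[OF conn _ _ edge_eq] by blast
    then show ?thesis
      using that extremal(1) s edge_eq by blast
  qed
qed

lemma extremal_eigenvalue_iff_T6_partition:
  assumes conn: "connected_graph E"
  shows "(\<exists>l. is_eigenvalue (hermN E A) l \<and> cmod l = real (max_degree E)) \<longleftrightarrow>
    regular E (max_degree E) \<and>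
    (\<exists>f. (\<forall>v. f v \<in> T6) \<and> (T6_partition_i E A f \<or> T6_partition_ii E A f))"
proof
  assume "\<exists>l. is_eigenvalue (hermN E A) l \<and> cmod l = real (max_degree E)"
  then obtain l where "is_eigenvalue (hermN E A) l" "cmod l = real (max_degree E)"
    by blast
  then obtain s f where "regular E (max_degree E)" "s = 1 \<or> s = -1" "\<And>w. f w \<in> T6"
    and "\<And>u v. E u v \<Longrightarrow> hermN E A $ u $ v * f v = s * f u"
    by (rule extremal_eigenvalue_T6_labelling[OF conn]) blast
  moreover have "f w \<noteq> 0" for w
    using \<open>f w \<in> T6\<close> zero_notin_T6 by auto
  ultimately show "regular E (max_degree E) \<and>
    (\<exists>f. (\<forall>v. f v \<in> T6) \<and> (T6_partition_i E A f \<or> T6_partition_ii E A f))"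
    using T6_partition_iff_edge_equation by blast
next
  assume "regular E (max_degree E) \<and>
    (\<exists>f. (\<forall>v. f v \<in> T6) \<and> (T6_partition_i E A f \<or> T6_partition_ii E A f))"
  then obtain f where reg: "regular E (max_degree E)" and T6: "\<And>w. f w \<in> T6"
    and part: "T6_partition_i E A f \<or> T6_partition_ii E A f"
    by blast
  have nonzero: "f w \<noteq> 0" for w
    using T6[of w] zero_notin_T6 by auto
  then obtain s where s: "s = 1 \<or> s = -1"
    and edge_eq: "\<And>u v. E u v \<Longrightarrow> hermN E A $ u $ v * f v = s * f u"
    using part T6_partition_iff_edge_equation by blast
  have "(\<chi> u. f u) \<noteq> 0"
    using nonzero by (auto simp: Finite_Cartesian_Product.vec_eq_iff)
  then have "is_eigenvalue (hermN E A) (of_nat (max_degree E) * s)"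
    unfolding is_eigenvalue_def using eigenvector_if_edge_equation[OF reg edge_eq] by blast
  moreover have "cmod (of_nat (max_degree E) * s) = real (max_degree E)"
    using s by (auto simp: norm_mult)
  ultimately show "\<exists>l. is_eigenvalue (hermN E A) l \<and> cmod l = real (max_degree E)"
    by blast
qed

end

theorem theorem3p1:
  fixes E A :: "'n::finite \<Rightarrow> 'n \<Rightarrow> bool"
  assumes "mixed_graph E A"
  shows "spectral_radius (hermN E A) \<le> real (max_degree E) \<and>
    (connected_graph E \<longrightarrow>
      (spectral_radius (hermN E A) = real (max_degree E) \<longleftrightarrow>
        regular E (max_degree E) \<and>
        (\<exists>f :: 'n \<Rightarrow> complex. (\<forall>v. f v \<in> T6) \<and>
          ( ((\<forall>u v. E u v \<and> f u = f v \<longrightarrow> undirected_edge E A u v) \<and>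
             (\<forall>u v. E u v \<and> f u \<noteq> f v \<longrightarrow>
                (A u v \<and> f v = cnj omega * f u) \<or> (A v u \<and> f u = cnj omega * f v)))
          \<or> ((\<forall>u v. E u v \<longrightarrow> f u \<noteq> f v) \<and>
             (\<forall>u v. undirected_edge E A u v \<longrightarrow> f v = - f u) \<and>
             (\<forall>u v. A u v \<longrightarrow> f v = - cnj omega * f u))))))"
proof -
  note bound = norm_eigenvalue_hermN_le_max_degree[OF assms]
  show ?thesis
    unfolding T6_partition_i_def[symmetric] T6_partition_ii_def[symmetric]
    using spectral_radius_le[OF bound] spectral_radius_eq_iff_attained[OF bound]
      extremal_eigenvalue_iff_T6_partition[OF assms]
    by blast
qed

end
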